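(* Let $B$ be a finitely realizable hypergroup and $A$ a normal sub-hypergroup of $B$. Then $A$ and the quotient hypergroup $B/A$ are finitely realizable.
   Context: A hypergroup is a nonempty set $H$ with $*:H\times H\to P^*(H)$ (nonempty subsets), extended to subsets by unions, which is associative, has a unique identity $e$, unique inverses $h^{-1}$ with $e\in(h^{-1}*h)\cap(h*h^{-1})$, and is reversible ($c\in a*b\Rightarrow a\in c*b^{-1},\ b\in a^{-1}*c$). A sub-hypergroup is a subset which is a hypergroup under the restricted hyperoperation; it is normal, $A$ say, if $bA=Ab$ for all $b\in B$ (with $bA=\{b\}*A$). The quotient $B/A$ is the hypergroup on the cosets $\{bA:b\in B\}$ with $(xA)(yA)=\{zA: z\in xA*yA\}$. For a nonempty set $X$: $1_X$ is the diagonal, $p^*=\{(a,b):(b,a)\in p\}$, $xp=\{y:(x,y)\in p\}$. An association scheme on $X$ is a partition $S$ of $X\times X$ with $1_X\in S$, closed under $p\mapsto p^*$, such that for all $p,q,r\in S$ there is a cardinal $a_{pq}^r$ with $|yp\cap zq^*|=a_{pq}^r$ for all $y\in X$, $z\in yr$. $\mathbf{H}(S)$ is the hypergroup on $S$ with $p*q=\{r: a_{pq}^r\ge1\}$, identity $1_X$, inverse $p^*$. A hypergroup is finitely realizable if it is isomorphic to $\mathbf{H}(S)$ for an association scheme $S$ on a finite set. *)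

theory Defs
  imports Main
begin

text \<open>A hypergroup is given by a carrier set H and a hyperoperation hop, which is only
  relevant on H. The hyperoperation is extended to subsets by unions.\<close>

definition set_hop :: "('a \<Rightarrow> 'a \<Rightarrow> 'a set) \<Rightarrow> 'a set \<Rightarrow> 'a set \<Rightarrow> 'a set" where
  "set_hop hop X Y = (\<Union>x\<in>X. \<Union>y\<in>Y. hop x y)"

definition is_hg_identity :: "'a set \<Rightarrow> ('a \<Rightarrow> 'a \<Rightarrow> 'a set) \<Rightarrow> 'a \<Rightarrow> bool" where
  "is_hg_identity H hop e \<longleftrightarrow> e \<in> H \<and> (\<forall>a\<in>H. hop e a = {a} \<and> hop a e = {a})"

definition hg_unit :: "'a set \<Rightarrow> ('a \<Rightarrow> 'a \<Rightarrow> 'a set) \<Rightarrow> 'a" where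
  "hg_unit H hop = (THE e. is_hg_identity H hop e)"

definition is_hg_inverse :: "'a set \<Rightarrow> ('a \<Rightarrow> 'a \<Rightarrow> 'a set) \<Rightarrow> 'a \<Rightarrow> 'a \<Rightarrow> bool" where
  "is_hg_inverse H hop h h' \<longleftrightarrow> h' \<in> H \<and> hg_unit H hop \<in> hop h' h \<inter> hop h h'"

definition hg_inv :: "'a set \<Rightarrow> ('a \<Rightarrow> 'a \<Rightarrow> 'a set) \<Rightarrow> 'a \<Rightarrow> 'a" where
  "hg_inv H hop h = (THE h'. is_hg_inverse H hop h h')"

definition hypergroup :: "'a set \<Rightarrow> ('a \<Rightarrow> 'a \<Rightarrow> 'a set) \<Rightarrow> bool" where
  "hypergroup H hop \<longleftrightarrow>
     H \<noteq> {} \<and>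
     (\<forall>a\<in>H. \<forall>b\<in>H. hop a b \<noteq> {} \<and> hop a b \<subseteq> H) \<and>
     (\<forall>a\<in>H. \<forall>b\<in>H. \<forall>c\<in>H. set_hop hop (hop a b) {c} = set_hop hop {a} (hop b c)) \<and>
     (\<exists>!e. is_hg_identity H hop e) \<and>
     (\<forall>h\<in>H. \<exists>!h'. is_hg_inverse H hop h h') \<and>
     (\<forall>a\<in>H. \<forall>b\<in>H. \<forall>c\<in>H. c \<in> hop a b \<longrightarrow>
         a \<in> hop c (hg_inv H hop b) \<and> b \<in> hop (hg_inv H hop a) c)"

definition sub_hypergroup :: "'a set \<Rightarrow> 'a set \<Rightarrow> ('a \<Rightarrow> 'a \<Rightarrow> 'a set) \<Rightarrow> bool" where
  "sub_hypergroup A B hop \<longleftrightarrow> A \<subseteq> B \<and> hypergroup A hop"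

definition normal_sub_hypergroup :: "'a set \<Rightarrow> 'a set \<Rightarrow> ('a \<Rightarrow> 'a \<Rightarrow> 'a set) \<Rightarrow> bool" where
  "normal_sub_hypergroup A B hop \<longleftrightarrow> sub_hypergroup A B hop \<and>
     (\<forall>b\<in>B. set_hop hop {b} A = set_hop hop A {b})"

definition hcoset :: "('a \<Rightarrow> 'a \<Rightarrow> 'a set) \<Rightarrow> 'a \<Rightarrow> 'a set \<Rightarrow> 'a set" where
  "hcoset hop b A = set_hop hop {b} A"

definition quot_carrier :: "'a set \<Rightarrow> 'a set \<Rightarrow> ('a \<Rightarrow> 'a \<Rightarrow> 'a set) \<Rightarrow> 'a set set" where
  "quot_carrier B A hop = (\<lambda>b. hcoset hop b A) ` B"

definition quot_hop :: "'a set \<Rightarrow> ('a \<Rightarrow> 'a \<Rightarrow> 'a set) \<Rightarrow> 'a set \<Rightarrow> 'a set \<Rightarrow> 'a set set" where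
  "quot_hop A hop C D = {hcoset hop z A | z. z \<in> set_hop hop C D}"

definition hg_iso :: "'a set \<Rightarrow> ('a \<Rightarrow> 'a \<Rightarrow> 'a set) \<Rightarrow> 'b set \<Rightarrow> ('b \<Rightarrow> 'b \<Rightarrow> 'b set) \<Rightarrow> bool" where
  "hg_iso H hop K kop \<longleftrightarrow> (\<exists>f. bij_betw f H K \<and> (\<forall>a\<in>H. \<forall>b\<in>H. f ` hop a b = kop (f a) (f b)))"

definition out_nbhd :: "'x \<Rightarrow> ('x \<times> 'x) set \<Rightarrow> 'x set" where
  "out_nbhd x p = {y. (x, y) \<in> p}"

definition assoc_scheme :: "'x set \<Rightarrow> ('x \<times> 'x) set set \<Rightarrow> bool" where
  "assoc_scheme X S \<longleftrightarrow>
     X \<noteq> {} \<and>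
     (\<forall>p\<in>S. p \<noteq> {}) \<and> \<Union>S = X \<times> X \<and> (\<forall>p\<in>S. \<forall>q\<in>S. p \<noteq> q \<longrightarrow> p \<inter> q = {}) \<and>
     Id_on X \<in> S \<and>
     (\<forall>p\<in>S. p\<inverse> \<in> S) \<and>
     (\<forall>p\<in>S. \<forall>q\<in>S. \<forall>r\<in>S. \<exists>c. \<forall>y\<in>X. \<forall>z\<in>out_nbhd y r.
         card (out_nbhd y p \<inter> out_nbhd z (q\<inverse>)) = c)"

text \<open>Intersection number a_pq^r (for a finite scheme; the value is independent of the
  chosen pair in r by the scheme axiom).\<close>
definition isect_number :: "('x \<times> 'x) set \<Rightarrow> ('x \<times> 'x) set \<Rightarrow> ('x \<times> 'x) set \<Rightarrow> nat" where
  "isect_number p q r = (let (y, z) = (SOME yz. yz \<in> r) in card (out_nbhd y p \<inter> out_nbhd z (q\<inverse>)))"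

definition scheme_hop :: "('x \<times> 'x) set set \<Rightarrow> ('x \<times> 'x) set \<Rightarrow> ('x \<times> 'x) set \<Rightarrow> ('x \<times> 'x) set set" where
  "scheme_hop S p q = {r\<in>S. isect_number p q r \<ge> 1}"

text \<open>Finitely realizable: isomorphic to H(S) for an association scheme S on a finite set.
  Every finite set is in bijection with a subset of nat, so we take X :: nat set.\<close>
definition finitely_realizable :: "'a set \<Rightarrow> ('a \<Rightarrow> 'a \<Rightarrow> 'a set) \<Rightarrow> bool" where
  "finitely_realizable H hop \<longleftrightarrow>
     (\<exists>(X::nat set) S. finite X \<and> assoc_scheme X S \<and> hg_iso H hop S (scheme_hop S))"

end

theory Submission
  imports Defs
begin

text \<open>Transport everything along an isomorphism \<open>B \<cong> H(S)\<close>. A sub-hypergroup \<open>A\<close> becomes a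
  closed subset \<open>T\<close> of \<open>S\<close>: it contains \<open>1\<^sub>X\<close> and is closed under converse and the
  hyperoperation, so \<open>\<Union>T\<close> is an equivalence relation on \<open>X\<close>. Restricting the relations of
  \<open>T\<close> to one equivalence class gives an association scheme realizing \<open>A\<close>. If \<open>A\<close> is normal,
  then \<open>p \<circ> \<Union>T = \<Union>T \<circ> p\<close>, the relations \<open>p \<circ> \<Union>T\<close> are unions of \<open>(\<Union>T)\<close>-classes on both
  sides, and restricting them to a set of class representatives gives an association
  scheme whose intersection numbers are those of \<open>S\<close> divided by the common class size;
  it realizes \<open>B/A\<close>.\<close>

lemma set_hop_image:
  assumes hom: "\<forall>a\<in>B. \<forall>b\<in>B. f ` hop a b = kop (f a) (f b)" and "C \<subseteq> B" "D \<subseteq> B"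
  shows "f ` set_hop hop C D = set_hop kop (f ` C) (f ` D)"
proof -
  have "f ` set_hop hop C D = (\<Union>x\<in>C. \<Union>y\<in>D. f ` hop x y)"
    unfolding set_hop_def by (simp add: image_UN)
  also have "\<dots> = (\<Union>x\<in>C. \<Union>y\<in>D. kop (f x) (f y))"
    using assms by (intro SUP_cong refl) blast
  also have "\<dots> = set_hop kop (f ` C) (f ` D)"
    unfolding set_hop_def by simp
  finally show ?thesis .
qed

lemma hypergroup_hop_subset:
  assumes "hypergroup H hop" "a \<in> H" "b \<in> H"
  shows "hop a b \<subseteq> H"
  using assms unfolding hypergroup_def by blast

lemma hypergroup_set_hop_subset:
  assumes "hypergroup H hop" "C \<subseteq> H" "D \<subseteq> H"
  shows "set_hop hop C D \<subseteq> H"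
  using hypergroup_hop_subset[OF assms(1)] assms(2,3) unfolding set_hop_def by blast

lemma hypergroup_unit:
  assumes "hypergroup H hop"
  shows "is_hg_identity H hop (hg_unit H hop)"
proof -
  have "\<exists>!e. is_hg_identity H hop e"
    using assms unfolding hypergroup_def by blast
  thus ?thesis unfolding hg_unit_def by (rule theI')
qed

lemma hypergroup_inverse_exists:
  assumes "hypergroup H hop" "h \<in> H"
  shows "\<exists>h'. is_hg_inverse H hop h h'"
  using assms unfolding hypergroup_def by blast

lemma hg_iso_trans:
  assumes "hg_iso H hop K kop" "hg_iso K kop L lop"
  shows "hg_iso H hop L lop"
proof -
  obtain f where f: "bij_betw f H K" "\<forall>a\<in>H. \<forall>b\<in>H. f ` hop a b = kop (f a) (f b)"
    using assms(1) unfolding hg_iso_def by blast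
  obtain g where g: "bij_betw g K L" "\<forall>a\<in>K. \<forall>b\<in>K. g ` kop a b = lop (g a) (g b)"
    using assms(2) unfolding hg_iso_def by blast
  have "(g \<circ> f) ` hop a b = lop ((g \<circ> f) a) ((g \<circ> f) b)" if "a \<in> H" "b \<in> H" for a b
  proof -
    have "f a \<in> K" "f b \<in> K" using f(1) that bij_betwE by blast+
    hence "g ` f ` hop a b = lop (g (f a)) (g (f b))" using f(2) g(2) that by simp
    thus ?thesis by (simp add: image_comp)
  qed
  thus ?thesis unfolding hg_iso_def using bij_betw_trans[OF f(1) g(1)] by blast
qed

lemma hg_iso_restrict:
  assumes "bij_betw f B K" "\<forall>a\<in>B. \<forall>b\<in>B. f ` hop a b = kop (f a) (f b)" "A \<subseteq> B"
  shows "hg_iso A hop (f ` A) kop"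
proof -
  have "bij_betw f A (f ` A)"
    using assms(1,3) by (meson bij_betw_def inj_on_subset)
  thus ?thesis unfolding hg_iso_def using assms(2,3) by blast
qed

lemma hg_iso_quotient:
  assumes hB: "hypergroup B hop" and bij: "bij_betw f B K"
    and hom: "\<forall>a\<in>B. \<forall>b\<in>B. f ` hop a b = kop (f a) (f b)" and AB: "A \<subseteq> B"
  shows "hg_iso (quot_carrier B A hop) (quot_hop A hop)
                (quot_carrier K (f ` A) kop) (quot_hop (f ` A) kop)"
proof -
  have coset_B: "hcoset hop b A \<subseteq> B" if "b \<in> B" for b
    unfolding hcoset_def using hypergroup_set_hop_subset[OF hB _ AB] that by blast
  have coset_image: "f ` hcoset hop b A = hcoset kop (f b) (f ` A)" if "b \<in> B" for b
    unfolding hcoset_def using set_hop_image[OF hom _ AB, of "{b}"] that by simp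
  have inj: "inj_on ((`) f) (quot_carrier B A hop)"
  proof (rule inj_onI)
    fix C D assume CD: "C \<in> quot_carrier B A hop" "D \<in> quot_carrier B A hop" "f ` C = f ` D"
    hence "C \<subseteq> B" "D \<subseteq> B" using coset_B unfolding quot_carrier_def by blast+
    thus "C = D" using inj_on_image_eq_iff[OF bij_betw_imp_inj_on[OF bij]] CD(3) by blast
  qed
  have "(`) f ` quot_carrier B A hop = (\<lambda>b. hcoset kop (f b) (f ` A)) ` B"
    unfolding quot_carrier_def image_image using coset_image by (rule image_cong[OF refl])
  also have "\<dots> = quot_carrier K (f ` A) kop"
    unfolding quot_carrier_def
    using bij_betw_imp_surj_on[OF bij] image_image[of "\<lambda>w. hcoset kop w (f ` A)" f B] by simp
  finally have bij_cosets: "bij_betw ((`) f) (quot_carrier B A hop) (quot_carrier K (f ` A) kop)"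
    using inj unfolding bij_betw_def by blast
  have "(`) f ` quot_hop A hop C D = quot_hop (f ` A) kop (f ` C) (f ` D)"
    if "C \<in> quot_carrier B A hop" "D \<in> quot_carrier B A hop" for C D
  proof -
    have CD: "C \<subseteq> B" "D \<subseteq> B" using that coset_B unfolding quot_carrier_def by blast+
    have Z: "set_hop hop C D \<subseteq> B" using hypergroup_set_hop_subset[OF hB CD] .
    have "quot_hop A hop C D = (\<lambda>z. hcoset hop z A) ` set_hop hop C D"
      unfolding quot_hop_def by blast
    hence "(`) f ` quot_hop A hop C D = (\<lambda>z. f ` hcoset hop z A) ` set_hop hop C D"
      by (simp only: image_image)
    also have "\<dots> = (\<lambda>z. hcoset kop (f z) (f ` A)) ` set_hop hop C D"
      using Z coset_image by (intro image_cong[OF refl]) blast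
    also have "\<dots> = (\<lambda>w. hcoset kop w (f ` A)) ` set_hop kop (f ` C) (f ` D)"
      by (simp only: set_hop_image[OF hom CD, symmetric] image_image)
    also have "\<dots> = quot_hop (f ` A) kop (f ` C) (f ` D)"
      unfolding quot_hop_def by blast
    finally show ?thesis .
  qed
  thus ?thesis unfolding hg_iso_def using bij_cosets by blast
qed

lemma ex_constant_on_rel:
  assumes "\<And>a b a' b'. (a, b) \<in> r \<Longrightarrow> (a', b') \<in> r \<Longrightarrow> g a b = (g a' b' :: nat)"
  shows "\<exists>c. \<forall>y\<in>Y. \<forall>z\<in>out_nbhd y r. g y z = c"
proof (cases "r = {}")
  case True
  thus ?thesis unfolding out_nbhd_def by auto
next
  case False
  then obtain a b where "(a, b) \<in> r" by auto
  thus ?thesis using assms unfolding out_nbhd_def by blast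
qed

locale finite_scheme =
  fixes X :: "'x set" and S :: "('x \<times> 'x) set set"
  assumes scheme: "assoc_scheme X S" and finite_points: "finite X"
begin

lemma
  shows points_nonempty: "X \<noteq> {}"
    and Union_rels: "\<Union>S = X \<times> X"
    and Id_on_in_rels: "Id_on X \<in> S"
    and rel_nonempty: "p \<in> S \<Longrightarrow> p \<noteq> {}"
    and converse_in_rels: "p \<in> S \<Longrightarrow> p\<inverse> \<in> S"
    and rels_disjoint: "p \<in> S \<Longrightarrow> q \<in> S \<Longrightarrow> p \<noteq> q \<Longrightarrow> p \<inter> q = {}"
  using scheme unfolding assoc_scheme_def by auto

lemma rel_subset: "p \<in> S \<Longrightarrow> p \<subseteq> X \<times> X"
  using Union_rels by blast

lemma rel_eqI: "p \<in> S \<Longrightarrow> q \<in> S \<Longrightarrow> x \<in> p \<Longrightarrow> x \<in> q \<Longrightarrow> p = q"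
  using rels_disjoint by blast

lemma ex_rel: "a \<in> X \<Longrightarrow> b \<in> X \<Longrightarrow> \<exists>p\<in>S. (a, b) \<in> p"
  using Union_rels by blast

lemma finite_rels: "finite S"
proof -
  have "S \<subseteq> Pow (X \<times> X)" using rel_subset by blast
  moreover have "finite (Pow (X \<times> X))" using finite_points by simp
  ultimately show ?thesis by (rule finite_subset)
qed

lemma out_nbhd_subset: "p \<in> S \<Longrightarrow> out_nbhd y p \<subseteq> X"
  using rel_subset unfolding out_nbhd_def by blast

lemma card_out_nbhd_Int_eq:
  assumes "p \<in> S" "q \<in> S" "r \<in> S" "(y, z) \<in> r" "(y', z') \<in> r"
  shows "card (out_nbhd y p \<inter> out_nbhd z (q\<inverse>)) = card (out_nbhd y' p \<inter> out_nbhd z' (q\<inverse>))"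
proof -
  obtain c where c: "\<forall>y\<in>X. \<forall>z\<in>out_nbhd y r. card (out_nbhd y p \<inter> out_nbhd z (q\<inverse>)) = c"
    using scheme assms(1-3) unfolding assoc_scheme_def by meson
  have "y \<in> X" "y' \<in> X" using rel_subset[OF assms(3)] assms(4,5) by auto
  moreover have "z \<in> out_nbhd y r" "z' \<in> out_nbhd y' r"
    using assms(4,5) unfolding out_nbhd_def by auto
  ultimately show ?thesis using c by metis
qed

lemma isect_number_eq:
  assumes "p \<in> S" "q \<in> S" "r \<in> S" "(y, z) \<in> r"
  shows "isect_number p q r = card (out_nbhd y p \<inter> out_nbhd z (q\<inverse>))"
proof -
  have "(SOME yz. yz \<in> r) \<in> r" using assms(4) by (rule someI)
  moreover obtain y' z' where "(SOME yz. yz \<in> r) = (y', z')" by fastforce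
  ultimately show ?thesis
    unfolding isect_number_def Let_def using card_out_nbhd_Int_eq[OF assms] by simp
qed

lemma scheme_hop_iff:
  assumes "p \<in> S" "q \<in> S" "r \<in> S" "(a, c) \<in> r"
  shows "r \<in> scheme_hop S p q \<longleftrightarrow> (\<exists>b. (a, b) \<in> p \<and> (b, c) \<in> q)"
proof -
  have fin: "finite (out_nbhd a p \<inter> out_nbhd c (q\<inverse>))"
    using out_nbhd_subset[OF assms(1)] finite_points by (meson finite_Int finite_subset)
  have "r \<in> scheme_hop S p q \<longleftrightarrow> 1 \<le> card (out_nbhd a p \<inter> out_nbhd c (q\<inverse>))"
    unfolding scheme_hop_def using assms isect_number_eq by auto
  also have "\<dots> \<longleftrightarrow> out_nbhd a p \<inter> out_nbhd c (q\<inverse>) \<noteq> {}"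
    using fin by (metis One_nat_def Suc_le_eq card_gt_0_iff)
  finally show ?thesis unfolding out_nbhd_def by auto
qed

lemma scheme_hop_subset: "scheme_hop S p q \<subseteq> S"
  unfolding scheme_hop_def by auto

text \<open>Every relation has the same (positive) valency at every point, since
  \<open>|xp| = a\<^bsub>p p\<^sup>*\<^esub>\<^sup>1\<close> does not depend on \<open>x\<close>.\<close>
lemma ex_out_edge:
  assumes "p \<in> S" "x \<in> X"
  shows "\<exists>y. (x, y) \<in> p"
proof -
  obtain a b where ab: "(a, b) \<in> p" using rel_nonempty[OF assms(1)] by auto
  have a: "a \<in> X" using rel_subset[OF assms(1)] ab by auto
  have "card (out_nbhd x p \<inter> out_nbhd x ((p\<inverse>)\<inverse>)) = card (out_nbhd a p \<inter> out_nbhd a ((p\<inverse>)\<inverse>))"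
    using card_out_nbhd_Int_eq[OF assms(1) converse_in_rels[OF assms(1)] Id_on_in_rels, of x x a a]
      assms(2) a by auto
  hence c: "card (out_nbhd x p) = card (out_nbhd a p)" by simp
  have "out_nbhd a p \<noteq> {}" using ab unfolding out_nbhd_def by auto
  hence "card (out_nbhd a p) > 0"
    using out_nbhd_subset[OF assms(1)] finite_points by (meson card_gt_0_iff finite_subset)
  hence "out_nbhd x p \<noteq> {}" using c by auto
  thus ?thesis unfolding out_nbhd_def by auto
qed

lemma Union_set_hop:
  assumes "P \<subseteq> S" "Q \<subseteq> S"
  shows "\<Union>(set_hop (scheme_hop S) P Q) = \<Union>P O \<Union>Q"
proof
  show "\<Union>(set_hop (scheme_hop S) P Q) \<subseteq> \<Union>P O \<Union>Q"
  proof
    fix x assume "x \<in> \<Union>(set_hop (scheme_hop S) P Q)"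
    then obtain p q r where pq: "p \<in> P" "q \<in> Q" "r \<in> scheme_hop S p q" "x \<in> r"
      unfolding set_hop_def by blast
    obtain a c where x: "x = (a, c)" by fastforce
    have "r \<in> S" using pq(3) scheme_hop_subset by auto
    then obtain b where "(a, b) \<in> p" "(b, c) \<in> q"
      using scheme_hop_iff[of p q r a c] pq assms x by auto
    thus "x \<in> \<Union>P O \<Union>Q" using pq x by blast
  qed
next
  show "\<Union>P O \<Union>Q \<subseteq> \<Union>(set_hop (scheme_hop S) P Q)"
  proof
    fix x assume "x \<in> \<Union>P O \<Union>Q"
    then obtain a b c p q where x: "x = (a, c)" "(a, b) \<in> p" "(b, c) \<in> q" "p \<in> P" "q \<in> Q"
      by blast
    have "a \<in> X" "c \<in> X" using rel_subset assms x by blast+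
    then obtain r where r: "r \<in> S" "(a, c) \<in> r" using ex_rel by blast
    have "r \<in> scheme_hop S p q" using scheme_hop_iff[of p q r a c] r x assms by blast
    thus "x \<in> \<Union>(set_hop (scheme_hop S) P Q)" unfolding set_hop_def using x r by blast
  qed
qed

lemma Union_eq_imp_eq:
  assumes "C \<subseteq> S" "D \<subseteq> S" "\<Union>C = \<Union>D"
  shows "C = D"
proof -
  have sub: "C' \<subseteq> D'" if CD': "C' \<subseteq> S" "D' \<subseteq> S" "\<Union>C' = \<Union>D'" for C' D'
  proof
    fix p assume p: "p \<in> C'"
    have "p \<noteq> {}" using rel_nonempty p CD'(1) by blast
    then obtain x where x: "x \<in> p" by blast
    then obtain q where "q \<in> D'" "x \<in> q" using p CD'(3) by blast
    thus "p \<in> D'" using rel_eqI[of p q x] p x CD' by blast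
  qed
  show ?thesis using sub[of C D] sub[of D C] assms by auto
qed

lemma rel_subset_Union:
  assumes "P \<subseteq> S" "p \<in> S" "x \<in> p" "x \<in> \<Union>P"
  shows "p \<subseteq> \<Union>P"
proof -
  obtain q where q: "q \<in> P" "x \<in> q" using assms(4) by blast
  hence "p = q" using rel_eqI[of p q x] assms by blast
  thus ?thesis using q(1) by blast
qed

lemma card_Union_paths_eq:
  assumes P: "P \<subseteq> S" and Q: "Q \<subseteq> S" and r: "r \<in> S" "(y, z) \<in> r" "(y', z') \<in> r"
  shows "card {w. (y, w) \<in> \<Union>P \<and> (w, z) \<in> \<Union>Q} = card {w. (y', w) \<in> \<Union>P \<and> (w, z') \<in> \<Union>Q}"
proof -
  define F :: "'x \<Rightarrow> 'x \<Rightarrow> ('x \<times> 'x) set \<times> ('x \<times> 'x) set \<Rightarrow> 'x set"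
    where "F y z pq = out_nbhd y (fst pq) \<inter> out_nbhd z ((snd pq)\<inverse>)" for y z pq
  have "finite P" "finite Q" using P Q finite_rels finite_subset by blast+
  hence finPQ: "finite (P \<times> Q)" by simp
  have count: "card {w. (y, w) \<in> \<Union>P \<and> (w, z) \<in> \<Union>Q} = (\<Sum>pq\<in>P\<times>Q. card (F y z pq))" for y z
  proof -
    have fin: "\<forall>pq\<in>P \<times> Q. finite (F y z pq)"
    proof
      fix pq assume "pq \<in> P \<times> Q"
      hence "fst pq \<in> S" using P by auto
      hence "F y z pq \<subseteq> X" using out_nbhd_subset unfolding F_def by blast
      thus "finite (F y z pq)" using finite_points by (rule finite_subset)
    qed
    have disj: "\<forall>i\<in>P \<times> Q. \<forall>j\<in>P \<times> Q. i \<noteq> j \<longrightarrow> F y z i \<inter> F y z j = {}"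
    proof (intro ballI impI)
      fix i j assume ij: "i \<in> P \<times> Q" "j \<in> P \<times> Q" "i \<noteq> j"
      show "F y z i \<inter> F y z j = {}"
      proof (rule ccontr)
        assume "F y z i \<inter> F y z j \<noteq> {}"
        then obtain w where w: "(y, w) \<in> fst i" "(y, w) \<in> fst j" "(w, z) \<in> snd i" "(w, z) \<in> snd j"
          unfolding F_def out_nbhd_def by auto
        have "fst i \<in> S" "fst j \<in> S" "snd i \<in> S" "snd j \<in> S" using ij P Q by auto
        hence "fst i = fst j" "snd i = snd j"
          using rel_eqI[of "fst i" "fst j", OF _ _ w(1,2)] rel_eqI[of "snd i" "snd j", OF _ _ w(3,4)]
          by simp_all
        thus False using ij(3) by (simp add: prod_eq_iff)
      qed
    qed
    have "{w. (y, w) \<in> \<Union>P \<and> (w, z) \<in> \<Union>Q} = \<Union>(F y z ` (P \<times> Q))"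
    proof (intro subset_antisym subsetI)
      fix w assume "w \<in> {w. (y, w) \<in> \<Union>P \<and> (w, z) \<in> \<Union>Q}"
      then obtain p q where "p \<in> P" "q \<in> Q" "(y, w) \<in> p" "(w, z) \<in> q" by blast
      hence "(p, q) \<in> P \<times> Q" "w \<in> F y z (p, q)" unfolding F_def out_nbhd_def by auto
      thus "w \<in> \<Union>(F y z ` (P \<times> Q))" by blast
    qed (auto simp: F_def out_nbhd_def)
    thus ?thesis using card_UN_disjoint[OF finPQ fin disj] by simp
  qed
  have "(\<Sum>pq\<in>P\<times>Q. card (F y z pq)) = (\<Sum>pq\<in>P\<times>Q. card (F y' z' pq))"
  proof (rule sum.cong[OF refl])
    fix pq assume "pq \<in> P \<times> Q"
    hence "fst pq \<in> S" "snd pq \<in> S" using P Q by auto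
    thus "card (F y z pq) = card (F y' z' pq)"
      unfolding F_def by (rule card_out_nbhd_Int_eq[OF _ _ r])
  qed
  thus ?thesis using count by simp
qed

text \<open>A relation \<open>e\<close> with \<open>e * e = {e}\<close> is transitive and has positive valency, so on the
  finite set \<open>X\<close> it contains a loop; since the diagonal is a relation of \<open>S\<close>, \<open>e = 1\<^sub>X\<close>.\<close>
lemma idempotent_rel_eq_Id_on:
  assumes e: "e \<in> S" "scheme_hop S e e = {e}"
  shows "e = Id_on X"
proof -
  have "trans e"
  proof (rule transI)
    fix a b c assume ab: "(a, b) \<in> e" "(b, c) \<in> e"
    have "a \<in> X" "c \<in> X" using rel_subset[OF e(1)] ab by auto
    then obtain r where r: "r \<in> S" "(a, c) \<in> r" using ex_rel by blast
    have "r \<in> scheme_hop S e e" using scheme_hop_iff[OF e(1) e(1) r] ab by blast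
    thus "(a, c) \<in> e" using r e(2) by simp
  qed
  have "\<exists>x. (x, x) \<in> e"
  proof (rule ccontr)
    assume no_loop: "\<not> (\<exists>x. (x, x) \<in> e)"
    have "acyclic e" unfolding acyclic_def using trancl_id[OF \<open>trans e\<close>] no_loop by simp
    moreover have "finite e"
      using rel_subset[OF e(1)] finite_points by (meson finite_SigmaI finite_subset)
    ultimately have "wf (e\<inverse>)" using finite_acyclic_wf_converse by blast
    then obtain z where z: "z \<in> X" "\<forall>y. (y, z) \<in> e\<inverse> \<longrightarrow> y \<notin> X"
      using points_nonempty unfolding wf_eq_minimal by blast
    obtain y where y: "(z, y) \<in> e" using ex_out_edge[OF e(1) z(1)] by blast
    have "y \<in> X" using rel_subset[OF e(1)] y by auto
    thus False using z y by auto
  qed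
  then obtain x where x: "(x, x) \<in> e" by blast
  hence "(x, x) \<in> Id_on X" using rel_subset[OF e(1)] by auto
  thus ?thesis using rel_eqI[OF e(1) Id_on_in_rels x] by simp
qed

lemma Id_on_in_scheme_hop_imp_converse:
  assumes "p \<in> S" "q \<in> S" "Id_on X \<in> scheme_hop S q p"
  shows "q = p\<inverse>"
proof -
  obtain x where "x \<in> X" using points_nonempty by blast
  hence "(x, x) \<in> Id_on X" by auto
  then obtain b where b: "(x, b) \<in> q" "(b, x) \<in> p"
    using scheme_hop_iff[OF assms(2,1) Id_on_in_rels] assms(3) by blast
  thus ?thesis using rel_eqI[OF assms(2) converse_in_rels[OF assms(1)], of "(x, b)"] by auto
qed

end

locale closed_subset = finite_scheme +
  fixes T :: "('x \<times> 'x) set set"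
  assumes closed_subset_rels: "T \<subseteq> S"
    and Id_on_in_closed: "Id_on X \<in> T"
    and converse_closed: "p \<in> T \<Longrightarrow> p\<inverse> \<in> T"
    and scheme_hop_closed: "p \<in> T \<Longrightarrow> q \<in> T \<Longrightarrow> scheme_hop S p q \<subseteq> T"
begin

lemma Union_closed_subset: "\<Union>T \<subseteq> X \<times> X"
  using closed_subset_rels rel_subset by blast

lemma Union_closed_refl: "x \<in> X \<Longrightarrow> (x, x) \<in> \<Union>T"
  using Id_on_in_closed by auto

lemma Union_closed_sym: "(a, b) \<in> \<Union>T \<Longrightarrow> (b, a) \<in> \<Union>T"
  using converse_closed by blast

lemma Union_closed_trans:
  assumes "(a, b) \<in> \<Union>T" "(b, c) \<in> \<Union>T"
  shows "(a, c) \<in> \<Union>T"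
proof -
  obtain p q where pq: "p \<in> T" "q \<in> T" "(a, b) \<in> p" "(b, c) \<in> q" using assms by blast
  have "a \<in> X" "c \<in> X" using Union_closed_subset assms by auto
  then obtain r where r: "r \<in> S" "(a, c) \<in> r" using ex_rel by blast
  have "r \<in> scheme_hop S p q" using scheme_hop_iff[of p q r a c] r pq closed_subset_rels by blast
  hence "r \<in> T" using scheme_hop_closed pq by blast
  thus ?thesis using r by blast
qed

lemma class_closed:
  assumes "y \<in> out_nbhd x0 (\<Union>T)" "(y, w) \<in> p" "p \<in> T"
  shows "w \<in> out_nbhd x0 (\<Union>T)"
  using assms Union_closed_trans unfolding out_nbhd_def by blast

lemma out_nbhd_restrict_class:
  fixes x0
  defines "Y \<equiv> out_nbhd x0 (\<Union>T)"
  assumes "(y, z) \<in> Restr r Y" "p \<in> T"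
  shows "out_nbhd y (Restr p Y) \<inter> out_nbhd z ((Restr q Y)\<inverse>) = out_nbhd y p \<inter> out_nbhd z (q\<inverse>)"
  using assms class_closed[of y x0 _ p] unfolding out_nbhd_def by auto

lemma assoc_scheme_restrict_class:
  assumes x0: "x0 \<in> X"
  defines "Y \<equiv> out_nbhd x0 (\<Union>T)"
  shows "assoc_scheme Y ((\<lambda>p. Restr p Y) ` T)"
proof -
  define SY where "SY = (\<lambda>p. Restr p Y) ` T"
  have x0Y: "x0 \<in> Y" using Union_closed_refl[OF x0] unfolding Y_def out_nbhd_def by auto
  have "Restr p Y \<noteq> {}" if p: "p \<in> T" for p
  proof -
    obtain y where y: "(x0, y) \<in> p" using ex_out_edge[OF _ x0, of p] p closed_subset_rels by blast
    thus ?thesis using x0Y class_closed[OF x0Y[unfolded Y_def] y p] unfolding Y_def by blast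
  qed
  hence nonempty: "\<forall>p\<in>SY. p \<noteq> {}" unfolding SY_def by blast
  have cover: "\<Union>SY = Y \<times> Y"
  proof
    show "Y \<times> Y \<subseteq> \<Union>SY"
    proof
      fix x assume x: "x \<in> Y \<times> Y"
      then obtain a b where ab: "x = (a, b)" "(x0, a) \<in> \<Union>T" "(x0, b) \<in> \<Union>T"
        unfolding Y_def out_nbhd_def by auto
      have "(a, b) \<in> \<Union>T" using Union_closed_trans[OF Union_closed_sym[OF ab(2)] ab(3)] .
      thus "x \<in> \<Union>SY" using ab x unfolding SY_def by blast
    qed
  qed (auto simp: SY_def)
  have disjoint: "\<forall>p\<in>SY. \<forall>q\<in>SY. p \<noteq> q \<longrightarrow> p \<inter> q = {}"
  proof (intro ballI impI)
    fix p' q' assume "p' \<in> SY" "q' \<in> SY" "p' \<noteq> q'"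
    then obtain p q where pq: "p \<in> S" "q \<in> S" "p' = Restr p Y" "q' = Restr q Y" "p \<noteq> q"
      unfolding SY_def using closed_subset_rels by blast
    thus "p' \<inter> q' = {}" using rel_eqI[of p q] by blast
  qed
  have "Id_on Y = Restr (Id_on X) Y"
    using Union_closed_subset unfolding Y_def out_nbhd_def by auto
  hence Id: "Id_on Y \<in> SY" unfolding SY_def using Id_on_in_closed by blast
  have converse: "\<forall>p\<in>SY. p\<inverse> \<in> SY"
  proof
    fix p' assume "p' \<in> SY"
    then obtain p where p: "p \<in> T" "p' = Restr p Y" unfolding SY_def by blast
    hence "p'\<inverse> = Restr (p\<inverse>) Y" by auto
    thus "p'\<inverse> \<in> SY" unfolding SY_def using converse_closed p by blast
  qed
  have regular: "\<forall>p\<in>SY. \<forall>q\<in>SY. \<forall>r\<in>SY. \<exists>c. \<forall>y\<in>Y. \<forall>z\<in>out_nbhd y r.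
         card (out_nbhd y p \<inter> out_nbhd z (q\<inverse>)) = c"
  proof (intro ballI)
    fix p' q' r' assume "p' \<in> SY" "q' \<in> SY" "r' \<in> SY"
    then obtain p q r where pqr: "p \<in> T" "q \<in> T" "r \<in> T" "p' = Restr p Y"
      "q' = Restr q Y" "r' = Restr r Y" unfolding SY_def by blast
    have eq: "out_nbhd y p' \<inter> out_nbhd z (q'\<inverse>) = out_nbhd y p \<inter> out_nbhd z (q\<inverse>)"
      if "(y, z) \<in> r'" for y z
      using out_nbhd_restrict_class[of y z r x0 p q] that pqr unfolding Y_def by simp
    show "\<exists>c. \<forall>y\<in>Y. \<forall>z\<in>out_nbhd y r'. card (out_nbhd y p' \<inter> out_nbhd z (q'\<inverse>)) = c"
    proof (rule ex_constant_on_rel)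
      fix a b a' b' assume ab: "(a, b) \<in> r'" "(a', b') \<in> r'"
      show "card (out_nbhd a p' \<inter> out_nbhd b (q'\<inverse>)) = card (out_nbhd a' p' \<inter> out_nbhd b' (q'\<inverse>))"
        using eq[OF ab(1)] eq[OF ab(2)] card_out_nbhd_Int_eq[of p q r a b a' b'] pqr ab
          closed_subset_rels by auto
    qed
  qed
  have "Y \<noteq> {}" using x0Y by blast
  thus ?thesis unfolding assoc_scheme_def SY_def[symmetric]
    using nonempty cover disjoint Id converse regular by (intro conjI)
qed

lemma restrict_class_scheme_hop:
  assumes x0: "x0 \<in> X" and p: "p \<in> T" and q: "q \<in> T"
  defines "Y \<equiv> out_nbhd x0 (\<Union>T)"
  defines "SY \<equiv> (\<lambda>p. Restr p Y) ` T"
  shows "(\<lambda>r. Restr r Y) ` scheme_hop S p q = scheme_hop SY (Restr p Y) (Restr q Y)"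
proof -
  interpret Y: finite_scheme Y SY
  proof
    show "assoc_scheme Y SY" using assoc_scheme_restrict_class[OF x0] unfolding Y_def SY_def .
    have "Y \<subseteq> X" using Union_closed_subset unfolding Y_def out_nbhd_def by blast
    thus "finite Y" using finite_points finite_subset by blast
  qed
  have pqY: "Restr p Y \<in> SY" "Restr q Y \<in> SY" unfolding SY_def using p q by auto
  have "Restr r Y \<in> scheme_hop SY (Restr p Y) (Restr q Y) \<longleftrightarrow> r \<in> scheme_hop S p q"
    if r: "r \<in> T" for r
  proof -
    have rY: "Restr r Y \<in> SY" unfolding SY_def using r by blast
    obtain u v where uv: "(u, v) \<in> Restr r Y" using Y.rel_nonempty[OF rY] by auto
    have "Restr r Y \<in> scheme_hop SY (Restr p Y) (Restr q Y)
        \<longleftrightarrow> (\<exists>w. (u, w) \<in> Restr p Y \<and> (w, v) \<in> Restr q Y)"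
      using Y.scheme_hop_iff[OF pqY rY uv] .
    also have "\<dots> \<longleftrightarrow> (\<exists>w. (u, w) \<in> p \<and> (w, v) \<in> q)"
    proof
      assume "\<exists>w. (u, w) \<in> p \<and> (w, v) \<in> q"
      then obtain w where w: "(u, w) \<in> p" "(w, v) \<in> q" by blast
      have "u \<in> Y" "v \<in> Y" using uv by auto
      thus "\<exists>w. (u, w) \<in> Restr p Y \<and> (w, v) \<in> Restr q Y"
        using w class_closed[of u x0 w p] p unfolding Y_def by blast
    qed blast
    also have "\<dots> \<longleftrightarrow> r \<in> scheme_hop S p q"
      using scheme_hop_iff[of p q r u v] r p q closed_subset_rels uv by blast
    finally show ?thesis .
  qed
  note restrict_iff = this
  show ?thesis
  proof (rule set_eqI, rule iffI)
    fix x assume "x \<in> (\<lambda>r. Restr r Y) ` scheme_hop S p q"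
    then obtain r where "r \<in> scheme_hop S p q" "x = Restr r Y" by blast
    thus "x \<in> scheme_hop SY (Restr p Y) (Restr q Y)"
      using restrict_iff scheme_hop_closed[OF p q] by blast
  next
    fix x assume x: "x \<in> scheme_hop SY (Restr p Y) (Restr q Y)"
    then obtain r where "r \<in> T" "x = Restr r Y" using Y.scheme_hop_subset unfolding SY_def by blast
    thus "x \<in> (\<lambda>r. Restr r Y) ` scheme_hop S p q" using restrict_iff x by blast
  qed
qed

lemma inj_on_restrict_class:
  assumes x0: "x0 \<in> X"
  defines "Y \<equiv> out_nbhd x0 (\<Union>T)"
  shows "inj_on (\<lambda>p. Restr p Y) T"
proof
  fix p q assume pq: "p \<in> T" "q \<in> T" "Restr p Y = Restr q Y"
  obtain y where y: "(x0, y) \<in> p" using ex_out_edge[OF _ x0, of p] pq closed_subset_rels by blast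
  have "(x0, y) \<in> Restr p Y"
    using y pq Union_closed_refl[OF x0] unfolding Y_def out_nbhd_def by auto
  hence "(x0, y) \<in> q" using pq by blast
  thus "p = q" using rel_eqI[of p q] y pq closed_subset_rels by blast
qed

text \<open>Realized by the subscheme on one class of the equivalence relation \<open>\<Union>T\<close>.\<close>
lemma hg_iso_subscheme:
  "\<exists>Y SY. Y \<subseteq> X \<and> assoc_scheme Y SY \<and> hg_iso T (scheme_hop S) SY (scheme_hop SY)"
proof -
  obtain x0 where x0: "x0 \<in> X" using points_nonempty by blast
  define Y where "Y = out_nbhd x0 (\<Union>T)"
  define SY where "SY = (\<lambda>p. Restr p Y) ` T"
  have "bij_betw (\<lambda>p. Restr p Y) T SY"
    unfolding bij_betw_def SY_def Y_def using inj_on_restrict_class[OF x0] by blast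
  moreover have "\<forall>p\<in>T. \<forall>q\<in>T. (\<lambda>r. Restr r Y) ` scheme_hop S p q
                                = scheme_hop SY (Restr p Y) (Restr q Y)"
    using restrict_class_scheme_hop[OF x0] unfolding Y_def SY_def by blast
  moreover have "Y \<subseteq> X" using Union_closed_subset unfolding Y_def out_nbhd_def by blast
  ultimately show ?thesis
    using assoc_scheme_restrict_class[OF x0] unfolding hg_iso_def Y_def SY_def by blast
qed

end

locale normal_closed_subset = closed_subset +
  assumes normal: "p \<in> S \<Longrightarrow> p O \<Union>T = \<Union>T O p"
begin

definition class_rep where
  "class_rep x = (SOME y. y \<in> out_nbhd x (\<Union>T))"

definition quot_points where
  "quot_points = class_rep ` X"

definition quot_rel where
  "quot_rel p = Restr (p O \<Union>T) quot_points"

definition quot_rels where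
  "quot_rels = quot_rel ` S"

lemma class_rep_in: "x \<in> X \<Longrightarrow> (x, class_rep x) \<in> \<Union>T"
proof -
  assume "x \<in> X"
  hence "x \<in> out_nbhd x (\<Union>T)" using Union_closed_refl unfolding out_nbhd_def by simp
  hence "class_rep x \<in> out_nbhd x (\<Union>T)" unfolding class_rep_def by (rule someI)
  thus ?thesis unfolding out_nbhd_def by simp
qed

lemma class_rep_eq: "(x, y) \<in> \<Union>T \<Longrightarrow> class_rep x = class_rep y"
proof -
  assume "(x, y) \<in> \<Union>T"
  hence "out_nbhd x (\<Union>T) = out_nbhd y (\<Union>T)"
    unfolding out_nbhd_def using Union_closed_trans Union_closed_sym by blast
  thus ?thesis unfolding class_rep_def by simp
qed

lemma class_rep_in_quot_points: "x \<in> X \<Longrightarrow> class_rep x \<in> quot_points"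
  unfolding quot_points_def by blast

lemma quot_points_subset: "quot_points \<subseteq> X"
  unfolding quot_points_def using class_rep_in Union_closed_subset by blast

lemma finite_quot_points: "finite quot_points"
  using quot_points_subset finite_points finite_subset by blast

lemma quot_points_eqI:
  assumes "u \<in> quot_points" "v \<in> quot_points" "(u, v) \<in> \<Union>T"
  shows "u = v"
proof -
  have "class_rep u = u" if u: "u \<in> quot_points" for u
  proof -
    obtain x where x: "x \<in> X" "u = class_rep x" using u unfolding quot_points_def by blast
    thus ?thesis using class_rep_eq[OF class_rep_in[OF x(1)]] by simp
  qed
  thus ?thesis using assms class_rep_eq by metis
qed

text \<open>Normality makes \<open>p \<circ> \<Union>T\<close> a union of \<open>(\<Union>T)\<close>-classes on the left as well as on the right.\<close>
lemma relcomp_closed_saturated: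
  assumes p: "p \<in> S" and "(a', a) \<in> \<Union>T" "(b, b') \<in> \<Union>T" "(a, b) \<in> p O \<Union>T"
  shows "(a', b') \<in> p O \<Union>T"
proof -
  have "(a', b) \<in> (\<Union>T O p) O \<Union>T" using assms(2,4) by blast
  hence "(a', b) \<in> (p O \<Union>T) O \<Union>T" using normal[OF p] by simp
  hence "(a', b') \<in> p O (\<Union>T O \<Union>T) O \<Union>T" using assms(3) by blast
  thus ?thesis using Union_closed_trans by blast
qed

lemma relcomp_closed_subset: "p \<in> S \<Longrightarrow> p O \<Union>T \<subseteq> X \<times> X"
  using rel_subset Union_closed_subset by blast

lemma coset_subset_rels: "hcoset (scheme_hop S) p T \<subseteq> S"
  unfolding hcoset_def set_hop_def using scheme_hop_subset by blast

lemma Union_coset: "p \<in> S \<Longrightarrow> \<Union>(hcoset (scheme_hop S) p T) = p O \<Union>T"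
  unfolding hcoset_def using Union_set_hop[of "{p}" T] closed_subset_rels by simp

lemma relcomp_closed_eq_if_meet:
  assumes p: "p \<in> S" and q: "q \<in> S" and "(u, v) \<in> p O \<Union>T" "(u, v) \<in> q O \<Union>T"
  shows "p O \<Union>T = q O \<Union>T"
proof -
  have le: "q O \<Union>T \<subseteq> p O \<Union>T"
    if p: "p \<in> S" and q: "q \<in> S" and uv: "(u, v) \<in> p O \<Union>T" "(u, v) \<in> q O \<Union>T" for p q
  proof -
    obtain y where y: "(u, y) \<in> q" "(y, v) \<in> \<Union>T" using uv(2) by blast
    have "u \<in> X" using relcomp_closed_subset[OF p] uv by auto
    hence "(u, y) \<in> p O \<Union>T"
      using relcomp_closed_saturated[OF p Union_closed_refl Union_closed_sym[OF y(2)] uv(1)] by simp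
    hence "q \<subseteq> p O \<Union>T"
      using rel_subset_Union[of "hcoset (scheme_hop S) p T" q "(u, y)"] y(1) q
        coset_subset_rels Union_coset[OF p] by simp
    hence "q O \<Union>T \<subseteq> p O (\<Union>T O \<Union>T)" by blast
    thus ?thesis using Union_closed_trans by blast
  qed
  show ?thesis using le[OF q p assms(4,3)] le[OF p q assms(3,4)] by (rule subset_antisym)
qed

lemma quot_rel_eq_iff:
  assumes p: "p \<in> S" and q: "q \<in> S"
  shows "quot_rel p = quot_rel q \<longleftrightarrow> p O \<Union>T = q O \<Union>T"
proof
  assume eq: "quot_rel p = quot_rel q"
  have le: "q' O \<Union>T \<subseteq> p' O \<Union>T"
    if pq': "quot_rel p' = quot_rel q'" "p' \<in> S" "q' \<in> S" for p' q'
  proof (rule subrelI)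
    fix a b assume "(a, b) \<in> q' O \<Union>T"
    moreover have ab: "a \<in> X" "b \<in> X" using relcomp_closed_subset[OF pq'(3)] calculation by auto
    ultimately have "(class_rep a, class_rep b) \<in> q' O \<Union>T"
      using relcomp_closed_saturated[OF pq'(3) Union_closed_sym[OF class_rep_in[OF ab(1)]]
          class_rep_in[OF ab(2)]] by simp
    hence "(class_rep a, class_rep b) \<in> quot_rel p'"
      using pq'(1) class_rep_in_quot_points ab unfolding quot_rel_def by simp
    hence "(class_rep a, class_rep b) \<in> p' O \<Union>T" unfolding quot_rel_def by simp
    thus "(a, b) \<in> p' O \<Union>T"
      using relcomp_closed_saturated[OF pq'(2) class_rep_in[OF ab(1)]
          Union_closed_sym[OF class_rep_in[OF ab(2)]]] by simp
  qed
  show "p O \<Union>T = q O \<Union>T" using le[OF eq[symmetric] q p] le[OF eq p q] by (rule subset_antisym)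
qed (simp add: quot_rel_def)

lemma quot_rel_nonempty: "p \<in> S \<Longrightarrow> quot_rel p \<noteq> {}"
proof -
  assume p: "p \<in> S"
  obtain a b where ab: "(a, b) \<in> p" using rel_nonempty[OF p] by auto
  have X: "a \<in> X" "b \<in> X" using rel_subset[OF p] ab by auto
  have "(a, b) \<in> p O \<Union>T" using ab Union_closed_refl[OF X(2)] by blast
  hence "(class_rep a, class_rep b) \<in> p O \<Union>T"
    using relcomp_closed_saturated[OF p Union_closed_sym[OF class_rep_in[OF X(1)]]
        class_rep_in[OF X(2)]] by simp
  thus ?thesis using class_rep_in_quot_points X unfolding quot_rel_def by blast
qed

lemma finite_class: "finite (out_nbhd x (\<Union>T))"
proof -
  have "out_nbhd x (\<Union>T) \<subseteq> X" using Union_closed_subset unfolding out_nbhd_def by blast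
  thus ?thesis using finite_points by (rule finite_subset)
qed

text \<open>\<open>|x(\<Union>T)|\<close> counts the \<open>(\<Union>T, \<Union>T)\<close>-paths from \<open>x\<close>
  to \<open>x\<close>, and \<open>(x, x) \<in> 1\<^sub>X\<close>.\<close>
lemma card_class_eq:
  assumes "x \<in> X" "y \<in> X"
  shows "card (out_nbhd x (\<Union>T)) = card (out_nbhd y (\<Union>T))"
proof -
  have paths: "out_nbhd z (\<Union>T) = {w. (z, w) \<in> \<Union>T \<and> (w, z) \<in> \<Union>T}" for z
    unfolding out_nbhd_def using Union_closed_sym by blast
  have "(x, x) \<in> Id_on X" "(y, y) \<in> Id_on X" using assms by auto
  thus ?thesis
    unfolding paths by (rule card_Union_paths_eq[OF closed_subset_rels closed_subset_rels Id_on_in_rels])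
qed

lemma classes_disjoint:
  assumes "i \<in> quot_points" "j \<in> quot_points" "i \<noteq> j"
  shows "out_nbhd i (\<Union>T) \<inter> out_nbhd j (\<Union>T) = {}"
proof (rule ccontr)
  assume "out_nbhd i (\<Union>T) \<inter> out_nbhd j (\<Union>T) \<noteq> {}"
  then obtain x where "(i, x) \<in> \<Union>T" "(j, x) \<in> \<Union>T" unfolding out_nbhd_def by blast
  hence "(i, j) \<in> \<Union>T" using Union_closed_trans Union_closed_sym by blast
  thus False using quot_points_eqI assms by blast
qed

lemma paths_eq_UN_classes:
  assumes p: "p \<in> S" and q: "q \<in> S" and u: "u \<in> X" and v: "v \<in> X"
  shows "{w. (u, w) \<in> p O \<Union>T \<and> (w, v) \<in> q O \<Union>T}
       = (\<Union>w\<in>{w\<in>quot_points. (u, w) \<in> p O \<Union>T \<and> (w, v) \<in> q O \<Union>T}. out_nbhd w (\<Union>T))"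
proof -
  have uu: "(u, u) \<in> \<Union>T" "(v, v) \<in> \<Union>T" using Union_closed_refl u v by auto
  show ?thesis
  proof (intro subset_antisym subsetI)
    fix x assume x: "x \<in> {w. (u, w) \<in> p O \<Union>T \<and> (w, v) \<in> q O \<Union>T}"
    have xX: "x \<in> X" using x relcomp_closed_subset[OF p] by auto
    have "(u, class_rep x) \<in> p O \<Union>T"
      using relcomp_closed_saturated[OF p uu(1) class_rep_in[OF xX]] x by simp
    moreover have "(class_rep x, v) \<in> q O \<Union>T"
      using relcomp_closed_saturated[OF q Union_closed_sym[OF class_rep_in[OF xX]] uu(2)] x by simp
    moreover have "x \<in> out_nbhd (class_rep x) (\<Union>T)"
      using Union_closed_sym[OF class_rep_in[OF xX]] unfolding out_nbhd_def by simp
    ultimately show "x \<in> (\<Union>w\<in>{w\<in>quot_points. (u, w) \<in> p O \<Union>T \<and> (w, v) \<in> q O \<Union>T}. out_nbhd w (\<Union>T))"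
      using class_rep_in_quot_points[OF xX] by blast
  next
    fix x assume "x \<in> (\<Union>w\<in>{w\<in>quot_points. (u, w) \<in> p O \<Union>T \<and> (w, v) \<in> q O \<Union>T}. out_nbhd w (\<Union>T))"
    then obtain w where w: "(u, w) \<in> p O \<Union>T" "(w, v) \<in> q O \<Union>T" "(w, x) \<in> \<Union>T"
      unfolding out_nbhd_def by blast
    show "x \<in> {w. (u, w) \<in> p O \<Union>T \<and> (w, v) \<in> q O \<Union>T}"
      using relcomp_closed_saturated[OF p uu(1) w(3) w(1)]
        relcomp_closed_saturated[OF q Union_closed_sym[OF w(3)] uu(2) w(2)] by simp
  qed
qed

lemma card_paths_eq_quot_paths_mult:
  assumes p: "p \<in> S" and q: "q \<in> S" and u: "u \<in> X" and v: "v \<in> X"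
  shows "card {w. (u, w) \<in> p O \<Union>T \<and> (w, v) \<in> q O \<Union>T}
       = card {w\<in>quot_points. (u, w) \<in> p O \<Union>T \<and> (w, v) \<in> q O \<Union>T} * card (out_nbhd u (\<Union>T))"
proof -
  define W where "W = {w\<in>quot_points. (u, w) \<in> p O \<Union>T \<and> (w, v) \<in> q O \<Union>T}"
  have W_sub: "W \<subseteq> X" using quot_points_subset unfolding W_def by blast
  hence "finite W" using finite_points finite_subset by blast
  hence "card (\<Union>w\<in>W. out_nbhd w (\<Union>T)) = (\<Sum>w\<in>W. card (out_nbhd w (\<Union>T)))"
    using finite_class classes_disjoint unfolding W_def by (intro card_UN_disjoint) auto
  also have "\<dots> = card W * card (out_nbhd u (\<Union>T))"
    using card_class_eq[OF _ u] W_sub by (simp add: subset_iff)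
  finally show ?thesis unfolding paths_eq_UN_classes[OF assms] W_def .
qed

lemma card_paths_eq:
  assumes p: "p \<in> S" and q: "q \<in> S" and r: "r \<in> S"
    and uv: "(u, v) \<in> r O \<Union>T" and uv': "(u', v') \<in> r O \<Union>T"
  shows "card {w. (u, w) \<in> p O \<Union>T \<and> (w, v) \<in> q O \<Union>T}
       = card {w. (u', w) \<in> p O \<Union>T \<and> (w, v') \<in> q O \<Union>T}"
proof -
  obtain x where x: "(u, x) \<in> r" "(x, v) \<in> \<Union>T" using uv by blast
  obtain x' where x': "(u', x') \<in> r" "(x', v') \<in> \<Union>T" using uv' by blast
  have shift: "{w. (a, w) \<in> p O \<Union>T \<and> (w, b) \<in> q O \<Union>T} = {w. (a, w) \<in> p O \<Union>T \<and> (w, c) \<in> q O \<Union>T}"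
    if cb: "(c, b) \<in> \<Union>T" for a b c
  proof -
    have "(w, b) \<in> q O \<Union>T \<longleftrightarrow> (w, c) \<in> q O \<Union>T" if "w \<in> X" for w
      using relcomp_closed_saturated[OF q Union_closed_refl[OF that] Union_closed_sym[OF cb]]
        relcomp_closed_saturated[OF q Union_closed_refl[OF that] cb] by blast
    moreover have "w \<in> X" if "(a, w) \<in> p O \<Union>T" for w
      using that relcomp_closed_subset[OF p] by blast
    ultimately show ?thesis by blast
  qed
  have "card {w. (u, w) \<in> \<Union>(hcoset (scheme_hop S) p T) \<and> (w, x) \<in> \<Union>(hcoset (scheme_hop S) q T)}
      = card {w. (u', w) \<in> \<Union>(hcoset (scheme_hop S) p T) \<and> (w, x') \<in> \<Union>(hcoset (scheme_hop S) q T)}"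
    by (rule card_Union_paths_eq[OF coset_subset_rels coset_subset_rels r x(1) x'(1)])
  thus ?thesis unfolding Union_coset[OF p] Union_coset[OF q] shift[OF x(2)] shift[OF x'(2)] .
qed

lemma card_quot_paths_eq:
  assumes p: "p \<in> S" and q: "q \<in> S" and r: "r \<in> S"
    and ab: "(a, b) \<in> quot_rel r" and ab': "(a', b') \<in> quot_rel r"
  shows "card (out_nbhd a (quot_rel p) \<inter> out_nbhd b ((quot_rel q)\<inverse>))
       = card (out_nbhd a' (quot_rel p) \<inter> out_nbhd b' ((quot_rel q)\<inverse>))"
proof -
  have in_rel: "a \<in> quot_points" "b \<in> quot_points" "a' \<in> quot_points" "b' \<in> quot_points"
    "(a, b) \<in> r O \<Union>T" "(a', b') \<in> r O \<Union>T"
    using ab ab' unfolding quot_rel_def by auto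
  have X: "a \<in> X" "b \<in> X" "a' \<in> X" "b' \<in> X" using in_rel quot_points_subset by auto
  have out: "out_nbhd u (quot_rel p) \<inter> out_nbhd v ((quot_rel q)\<inverse>)
      = {w\<in>quot_points. (u, w) \<in> p O \<Union>T \<and> (w, v) \<in> q O \<Union>T}"
    if "u \<in> quot_points" "v \<in> quot_points" for u v
    using that unfolding out_nbhd_def quot_rel_def by auto
  have "a \<in> out_nbhd a (\<Union>T)" using Union_closed_refl[OF X(1)] unfolding out_nbhd_def by simp
  hence "card (out_nbhd a (\<Union>T)) > 0" using finite_class card_gt_0_iff by blast
  moreover have "card {w\<in>quot_points. (a, w) \<in> p O \<Union>T \<and> (w, b) \<in> q O \<Union>T} * card (out_nbhd a (\<Union>T))
      = card {w\<in>quot_points. (a', w) \<in> p O \<Union>T \<and> (w, b') \<in> q O \<Union>T} * card (out_nbhd a (\<Union>T))"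
  proof -
    have "card {w\<in>quot_points. (a, w) \<in> p O \<Union>T \<and> (w, b) \<in> q O \<Union>T} * card (out_nbhd a (\<Union>T))
      = card {w. (a, w) \<in> p O \<Union>T \<and> (w, b) \<in> q O \<Union>T}"
      using card_paths_eq_quot_paths_mult[OF p q X(1,2)] by simp
    also have "\<dots> = card {w. (a', w) \<in> p O \<Union>T \<and> (w, b') \<in> q O \<Union>T}"
      using card_paths_eq[OF p q r in_rel(5,6)] .
    also have "\<dots> = card {w\<in>quot_points. (a', w) \<in> p O \<Union>T \<and> (w, b') \<in> q O \<Union>T} * card (out_nbhd a (\<Union>T))"
      using card_paths_eq_quot_paths_mult[OF p q X(3,4)] card_class_eq[OF X(1,3)] by simp
    finally show ?thesis .
  qed
  ultimately show ?thesis using out in_rel by simp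
qed

lemma quot_rel_Id_on: "quot_rel (Id_on X) = Id_on quot_points"
proof (intro subset_antisym subrelI)
  fix u v assume "(u, v) \<in> quot_rel (Id_on X)"
  thus "(u, v) \<in> Id_on quot_points" using quot_points_eqI unfolding quot_rel_def by auto
next
  fix u v assume "(u, v) \<in> Id_on quot_points"
  thus "(u, v) \<in> quot_rel (Id_on X)"
    using quot_points_subset Union_closed_refl unfolding quot_rel_def by blast
qed

lemma converse_quot_rel: "p \<in> S \<Longrightarrow> (quot_rel p)\<inverse> = quot_rel (p\<inverse>)"
proof -
  assume p: "p \<in> S"
  have "(p O \<Union>T)\<inverse> = \<Union>T O p\<inverse>" using Union_closed_sym by blast
  also have "\<dots> = p\<inverse> O \<Union>T" using normal[OF converse_in_rels[OF p]] by simp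
  finally show ?thesis unfolding quot_rel_def by blast
qed

lemma assoc_scheme_quot: "assoc_scheme quot_points quot_rels"
  unfolding assoc_scheme_def
proof (intro conjI ballI impI)
  show "quot_points \<noteq> {}" unfolding quot_points_def using points_nonempty by blast
next
  fix p assume "p \<in> quot_rels"
  thus "p \<noteq> {}" unfolding quot_rels_def using quot_rel_nonempty by blast
next
  show "\<Union>quot_rels = quot_points \<times> quot_points"
  proof
    show "quot_points \<times> quot_points \<subseteq> \<Union>quot_rels"
    proof
      fix x assume x: "x \<in> quot_points \<times> quot_points"
      then obtain u v where uv: "x = (u, v)" "u \<in> X" "v \<in> X" using quot_points_subset by blast
      then obtain p where p: "p \<in> S" "(u, v) \<in> p" using ex_rel by blast
      hence "x \<in> quot_rel p"
        using uv x Union_closed_refl[OF uv(3)] unfolding quot_rel_def by blast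
      thus "x \<in> \<Union>quot_rels" unfolding quot_rels_def using p by blast
    qed
  qed (auto simp: quot_rels_def quot_rel_def)
next
  fix p' q' assume "p' \<in> quot_rels" "q' \<in> quot_rels" "p' \<noteq> q'"
  then obtain p q where pq: "p \<in> S" "q \<in> S" "p' = quot_rel p" "q' = quot_rel q"
    unfolding quot_rels_def by blast
  show "p' \<inter> q' = {}"
  proof (rule ccontr)
    assume "p' \<inter> q' \<noteq> {}"
    then obtain u v where "(u, v) \<in> p O \<Union>T" "(u, v) \<in> q O \<Union>T"
      unfolding pq quot_rel_def by blast
    thus False
      using relcomp_closed_eq_if_meet[OF pq(1,2)] quot_rel_eq_iff[OF pq(1,2)] pq \<open>p' \<noteq> q'\<close> by blast
  qed
next
  show "Id_on quot_points \<in> quot_rels"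
    unfolding quot_rels_def quot_rel_Id_on[symmetric] using Id_on_in_rels by (rule imageI)
next
  fix p' assume "p' \<in> quot_rels"
  then obtain p where p: "p \<in> S" "p' = quot_rel p" unfolding quot_rels_def by blast
  thus "p'\<inverse> \<in> quot_rels" unfolding quot_rels_def using converse_quot_rel converse_in_rels by simp
next
  fix p' q' r' assume "p' \<in> quot_rels" "q' \<in> quot_rels" "r' \<in> quot_rels"
  then obtain p q r where pqr: "p \<in> S" "q \<in> S" "r \<in> S" "p' = quot_rel p" "q' = quot_rel q"
    "r' = quot_rel r" unfolding quot_rels_def by blast
  show "\<exists>c. \<forall>y\<in>quot_points. \<forall>z\<in>out_nbhd y r'. card (out_nbhd y p' \<inter> out_nbhd z (q'\<inverse>)) = c"
    unfolding pqr(4-6) using card_quot_paths_eq[OF pqr(1-3)] by (rule ex_constant_on_rel)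
qed

lemma quot_rel_in_scheme_hop_iff:
  assumes p: "p \<in> S" and q: "q \<in> S" and r: "r \<in> S" and Z: "Z \<subseteq> S"
    and Z_Union: "\<Union>Z = (p O \<Union>T) O (q O \<Union>T)"
  shows "quot_rel r \<in> scheme_hop quot_rels (quot_rel p) (quot_rel q) \<longleftrightarrow> (\<exists>s\<in>Z. quot_rel s = quot_rel r)"
proof -
  interpret quot: finite_scheme quot_points quot_rels
    using assoc_scheme_quot finite_quot_points by unfold_locales
  have rels: "quot_rel p \<in> quot_rels" "quot_rel q \<in> quot_rels" "quot_rel r \<in> quot_rels"
    unfolding quot_rels_def using p q r by auto
  obtain u v where uv: "(u, v) \<in> quot_rel r" using quot_rel_nonempty[OF r] by auto
  have uv': "u \<in> X" "v \<in> X" "u \<in> quot_points" "v \<in> quot_points" "(u, v) \<in> r O \<Union>T"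
    using uv quot_points_subset unfolding quot_rel_def by auto
  have "quot_rel r \<in> scheme_hop quot_rels (quot_rel p) (quot_rel q)
      \<longleftrightarrow> (\<exists>w. (u, w) \<in> quot_rel p \<and> (w, v) \<in> quot_rel q)"
    using quot.scheme_hop_iff[OF rels uv] .
  also have "\<dots> \<longleftrightarrow> (u, v) \<in> (p O \<Union>T) O (q O \<Union>T)"
  proof
    assume "(u, v) \<in> (p O \<Union>T) O (q O \<Union>T)"
    then obtain w where w: "(u, w) \<in> p O \<Union>T" "(w, v) \<in> q O \<Union>T" by blast
    have wX: "w \<in> X" using w relcomp_closed_subset[OF p] by auto
    have "(u, class_rep w) \<in> p O \<Union>T"
      using relcomp_closed_saturated[OF p Union_closed_refl[OF uv'(1)] class_rep_in[OF wX] w(1)] .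
    moreover have "(class_rep w, v) \<in> q O \<Union>T"
      using relcomp_closed_saturated[OF q Union_closed_sym[OF class_rep_in[OF wX]]
          Union_closed_refl[OF uv'(2)] w(2)] .
    ultimately show "\<exists>w. (u, w) \<in> quot_rel p \<and> (w, v) \<in> quot_rel q"
      unfolding quot_rel_def using uv' class_rep_in_quot_points[OF wX] by blast
  qed (auto simp: quot_rel_def)
  also have "\<dots> \<longleftrightarrow> (\<exists>s\<in>Z. quot_rel s = quot_rel r)"
  proof
    assume "(u, v) \<in> (p O \<Union>T) O (q O \<Union>T)"
    then obtain s where s: "s \<in> Z" "(u, v) \<in> s" using Z_Union by blast
    have "(u, v) \<in> s O \<Union>T" using s Union_closed_refl[OF uv'(2)] by blast
    hence "s O \<Union>T = r O \<Union>T" using relcomp_closed_eq_if_meet[OF _ r _ uv'(5)] s Z by blast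
    thus "\<exists>s\<in>Z. quot_rel s = quot_rel r" using s quot_rel_eq_iff[OF _ r] Z by blast
  next
    assume "\<exists>s\<in>Z. quot_rel s = quot_rel r"
    then obtain s where s: "s \<in> Z" "quot_rel s = quot_rel r" by blast
    have "(u, v) \<in> s O \<Union>T" using uv'(5) quot_rel_eq_iff[OF _ r] s Z by blast
    moreover have "s \<subseteq> (p O \<Union>T) O (q O \<Union>T)" using s Z_Union by blast
    ultimately have "(u, v) \<in> (p O \<Union>T) O (q O \<Union>T) O \<Union>T" by blast
    thus "(u, v) \<in> (p O \<Union>T) O (q O \<Union>T)" using Union_closed_trans by blast
  qed
  finally show ?thesis .
qed

lemma coset_eq_iff:
  assumes "p \<in> S" "q \<in> S"
  shows "hcoset (scheme_hop S) p T = hcoset (scheme_hop S) q T \<longleftrightarrow> quot_rel p = quot_rel q"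
proof
  assume "quot_rel p = quot_rel q"
  hence "\<Union>(hcoset (scheme_hop S) p T) = \<Union>(hcoset (scheme_hop S) q T)"
    using Union_coset quot_rel_eq_iff assms by simp
  thus "hcoset (scheme_hop S) p T = hcoset (scheme_hop S) q T"
    by (rule Union_eq_imp_eq[OF coset_subset_rels coset_subset_rels])
next
  assume "hcoset (scheme_hop S) p T = hcoset (scheme_hop S) q T"
  hence "p O \<Union>T = q O \<Union>T" using Union_coset assms by metis
  thus "quot_rel p = quot_rel q" unfolding quot_rel_def by simp
qed

lemma quot_rel_set_hop_cosets:
  assumes p: "p \<in> S" and q: "q \<in> S"
  shows "quot_rel ` set_hop (scheme_hop S) (hcoset (scheme_hop S) p T) (hcoset (scheme_hop S) q T)
       = scheme_hop quot_rels (quot_rel p) (quot_rel q)"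
proof -
  define Z where "Z = set_hop (scheme_hop S) (hcoset (scheme_hop S) p T) (hcoset (scheme_hop S) q T)"
  have Z: "Z \<subseteq> S" unfolding Z_def set_hop_def using scheme_hop_subset by blast
  have Z_Union: "\<Union>Z = (p O \<Union>T) O (q O \<Union>T)"
    unfolding Z_def using Union_set_hop[OF coset_subset_rels coset_subset_rels]
      Union_coset[OF p] Union_coset[OF q] by simp
  have "quot_rel ` Z = scheme_hop quot_rels (quot_rel p) (quot_rel q)"
  proof (intro set_eqI iffI)
    fix x assume "x \<in> quot_rel ` Z"
    then obtain s where "s \<in> Z" "x = quot_rel s" by blast
    thus "x \<in> scheme_hop quot_rels (quot_rel p) (quot_rel q)"
      using quot_rel_in_scheme_hop_iff[OF p q _ Z Z_Union, of s] Z by blast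
  next
    fix x assume x: "x \<in> scheme_hop quot_rels (quot_rel p) (quot_rel q)"
    then obtain r where "r \<in> S" "x = quot_rel r" unfolding scheme_hop_def quot_rels_def by blast
    thus "x \<in> quot_rel ` Z" using quot_rel_in_scheme_hop_iff[OF p q _ Z Z_Union] x by blast
  qed
  thus ?thesis unfolding Z_def .
qed

text \<open>A coset \<open>C\<close> corresponds to the restriction of \<open>\<Union>C\<close> to the class representatives.\<close>
lemma hg_iso_quotient_scheme:
  "\<exists>Xq Sq. Xq \<subseteq> X \<and> assoc_scheme Xq Sq \<and>
     hg_iso (quot_carrier S T (scheme_hop S)) (quot_hop T (scheme_hop S)) Sq (scheme_hop Sq)"
proof -
  define g where "g C = Restr (\<Union>C) quot_points" for C
  have g_coset: "g (hcoset (scheme_hop S) p T) = quot_rel p" if "p \<in> S" for p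
    unfolding g_def quot_rel_def Union_coset[OF that] ..
  have inj: "inj_on g (quot_carrier S T (scheme_hop S))"
  proof (rule inj_onI)
    fix C D assume CD: "C \<in> quot_carrier S T (scheme_hop S)" "D \<in> quot_carrier S T (scheme_hop S)"
      "g C = g D"
    then obtain p q where pq: "p \<in> S" "q \<in> S"
      "C = hcoset (scheme_hop S) p T" "D = hcoset (scheme_hop S) q T"
      unfolding quot_carrier_def by blast
    have "quot_rel p = quot_rel q" using CD(3) unfolding pq(3,4) g_coset[OF pq(1)] g_coset[OF pq(2)] .
    thus "C = D" unfolding pq(3,4) using coset_eq_iff[OF pq(1,2)] by simp
  qed
  have "g ` quot_carrier S T (scheme_hop S) = quot_rels"
    unfolding quot_carrier_def quot_rels_def image_image using g_coset by (rule image_cong[OF refl])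
  hence bij: "bij_betw g (quot_carrier S T (scheme_hop S)) quot_rels"
    using inj unfolding bij_betw_def by blast
  have hom: "g ` quot_hop T (scheme_hop S) C D = scheme_hop quot_rels (g C) (g D)"
    if CD: "C \<in> quot_carrier S T (scheme_hop S)" "D \<in> quot_carrier S T (scheme_hop S)" for C D
  proof -
    obtain p q where pq: "p \<in> S" "q \<in> S"
      "C = hcoset (scheme_hop S) p T" "D = hcoset (scheme_hop S) q T"
      using CD unfolding quot_carrier_def by blast
    have Z: "set_hop (scheme_hop S) C D \<subseteq> S" unfolding set_hop_def using scheme_hop_subset by blast
    have "quot_hop T (scheme_hop S) C D = (\<lambda>z. hcoset (scheme_hop S) z T) ` set_hop (scheme_hop S) C D"
      unfolding quot_hop_def by blast
    hence "g ` quot_hop T (scheme_hop S) C D = (\<lambda>z. g (hcoset (scheme_hop S) z T)) ` set_hop (scheme_hop S) C D"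
      by (simp only: image_image)
    also have "\<dots> = quot_rel ` set_hop (scheme_hop S) C D"
      using g_coset Z by (intro image_cong[OF refl]) blast
    also have "\<dots> = scheme_hop quot_rels (g C) (g D)"
      unfolding pq(3,4) g_coset[OF pq(1)] g_coset[OF pq(2)] by (rule quot_rel_set_hop_cosets[OF pq(1,2)])
    finally show ?thesis .
  qed
  have "hg_iso (quot_carrier S T (scheme_hop S)) (quot_hop T (scheme_hop S))
          quot_rels (scheme_hop quot_rels)"
    unfolding hg_iso_def using bij hom by blast
  thus ?thesis using quot_points_subset assoc_scheme_quot by blast
qed

end

context finite_scheme
begin

lemma closed_subset_hom_image:
  assumes hA: "hypergroup A hop" and fA: "f ` A \<subseteq> S"
    and hom: "\<forall>a\<in>A. \<forall>b\<in>A. f ` hop a b = scheme_hop S (f a) (f b)"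
  shows "closed_subset X S (f ` A)"
proof (intro closed_subset.intro closed_subset_axioms.intro)
  show "finite_scheme X S" by (rule finite_scheme_axioms)
  show "f ` A \<subseteq> S" by (rule fA)
  define e where "e = hg_unit A hop"
  have e: "e \<in> A" "hop e e = {e}" using hypergroup_unit[OF hA] unfolding e_def is_hg_identity_def by auto
  moreover have "f ` hop e e = scheme_hop S (f e) (f e)" using hom e(1) by blast
  ultimately have "scheme_hop S (f e) (f e) = {f e}" by simp
  hence fe: "f e = Id_on X" using idempotent_rel_eq_Id_on fA e(1) by blast
  thus "Id_on X \<in> f ` A" using e(1) by (metis image_eqI)
  show "p\<inverse> \<in> f ` A" if p: "p \<in> f ` A" for p
  proof -
    obtain a where a: "a \<in> A" "p = f a" using p by blast
    obtain a' where "is_hg_inverse A hop a a'" using hypergroup_inverse_exists[OF hA a(1)] by blast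
    hence a': "a' \<in> A" "e \<in> hop a' a" unfolding is_hg_inverse_def e_def by auto
    hence "Id_on X \<in> scheme_hop S (f a') p" using hom a fe by blast
    hence "f a' = p\<inverse>" using Id_on_in_scheme_hop_imp_converse fA a a' by blast
    thus ?thesis using a' by blast
  qed
  show "scheme_hop S p q \<subseteq> f ` A" if pq: "p \<in> f ` A" "q \<in> f ` A" for p q
  proof -
    obtain a b where ab: "a \<in> A" "b \<in> A" "p = f a" "q = f b" using pq by blast
    hence "scheme_hop S p q = f ` hop a b" using hom by simp
    thus ?thesis using hypergroup_hop_subset[OF hA ab(1,2)] by blast
  qed
qed

lemma normal_closed_subset_hom_image:
  assumes fB: "f ` B = S"
    and hom: "\<forall>a\<in>B. \<forall>b\<in>B. f ` hop a b = scheme_hop S (f a) (f b)"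
    and normal: "normal_sub_hypergroup A B hop"
  shows "normal_closed_subset X S (f ` A)"
proof -
  have AB: "A \<subseteq> B" and hA: "hypergroup A hop"
    and AbA: "\<forall>b\<in>B. set_hop hop {b} A = set_hop hop A {b}"
    using normal unfolding normal_sub_hypergroup_def sub_hypergroup_def by auto
  have "f ` A \<subseteq> S" using fB AB by blast
  moreover have "\<forall>a\<in>A. \<forall>b\<in>A. f ` hop a b = scheme_hop S (f a) (f b)" using hom AB by blast
  ultimately interpret closed_subset X S "f ` A" by (rule closed_subset_hom_image[OF hA])
  show ?thesis
  proof unfold_locales
    fix p assume "p \<in> S"
    then obtain b where b: "b \<in> B" "p = f b" using fB by blast
    have "p O \<Union>(f ` A) = \<Union>(set_hop (scheme_hop S) {p} (f ` A))"
      using Union_set_hop[of "{p}" "f ` A"] \<open>p \<in> S\<close> closed_subset_rels by simp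
    also have "\<dots> = \<Union>(f ` set_hop hop {b} A)"
      using set_hop_image[OF hom _ AB, of "{b}"] b by simp
    also have "\<dots> = \<Union>(f ` set_hop hop A {b})" using AbA b by simp
    also have "\<dots> = \<Union>(set_hop (scheme_hop S) (f ` A) {p})"
      using set_hop_image[OF hom AB, of "{b}"] b by simp
    also have "\<dots> = \<Union>(f ` A) O p"
      using Union_set_hop[of "f ` A" "{p}"] \<open>p \<in> S\<close> closed_subset_rels by simp
    finally show "p O \<Union>(f ` A) = \<Union>(f ` A) O p" .
  qed
qed

end

lemma finitely_realizableI:
  fixes Y :: "nat set"
  assumes "finite Y" "assoc_scheme Y SY" "hg_iso H hop K kop" "hg_iso K kop SY (scheme_hop SY)"
  shows "finitely_realizable H hop"
  unfolding finitely_realizable_def using assms(1,2) hg_iso_trans[OF assms(3,4)] by blast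

theorem proposition4p9:
  fixes B A :: "'a set" and hop :: "'a \<Rightarrow> 'a \<Rightarrow> 'a set"
  assumes "hypergroup B hop"
    and "finitely_realizable B hop"
    and "normal_sub_hypergroup A B hop"
  shows "finitely_realizable A hop \<and>
         finitely_realizable (quot_carrier B A hop) (quot_hop A hop)"
proof
  obtain X :: "nat set" and S f where X: "finite X" "assoc_scheme X S" and f: "bij_betw f B S"
    and hom: "\<forall>a\<in>B. \<forall>b\<in>B. f ` hop a b = scheme_hop S (f a) (f b)"
    using assms(2) unfolding finitely_realizable_def hg_iso_def by blast
  interpret finite_scheme X S using X by unfold_locales
  interpret normal_closed_subset X S "f ` A"
    using normal_closed_subset_hom_image[OF bij_betw_imp_surj_on[OF f] hom assms(3)] .
  have AB: "A \<subseteq> B" using assms(3) unfolding normal_sub_hypergroup_def sub_hypergroup_def by blast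
  obtain Y SY where Y: "Y \<subseteq> X" "assoc_scheme Y SY"
    and iso_sub: "hg_iso (f ` A) (scheme_hop S) SY (scheme_hop SY)"
    using hg_iso_subscheme by blast
  show "finitely_realizable A hop"
    using finitely_realizableI[OF finite_subset[OF Y(1) X(1)] Y(2) hg_iso_restrict[OF f hom AB] iso_sub] .
  obtain Xq Sq where Xq: "Xq \<subseteq> X" "assoc_scheme Xq Sq"
    and iso_quot: "hg_iso (quot_carrier S (f ` A) (scheme_hop S)) (quot_hop (f ` A) (scheme_hop S))
                          Sq (scheme_hop Sq)"
    using hg_iso_quotient_scheme by blast
  show "finitely_realizable (quot_carrier B A hop) (quot_hop A hop)"
    using finitely_realizableI[OF finite_subset[OF Xq(1) X(1)] Xq(2)
        hg_iso_quotient[OF assms(1) f hom AB] iso_quot] .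
qed

end
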